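(* Let $E$ be a separable metric space, $\mu$ a probability measure on $\mathcal{B}(E)$, and $S : E \to E$ a Borel measurable map. Assume that 1. for every $A \in \mathcal{B}(E)$, $$\lim_{k\to\infty}\sup_{i \in \mathbb{N}} \left|\mu(S^{-i}A \cap S^{-k}S^{-i}A) - \mu(S^{-i}A)\,\mu(S^{-k}S^{-i}A)\right| = 0,$$ and 2. $(E, \mathcal{B}(E), \mu, S)$ is asymptotically stationary with stationary limit $\nu$. For every $n \in \mathbb{N}$ define $\mu_n : \mathcal{B}(E^n) \to [0,1]$ by $\mu_n(A) = \mu\{x \in E : (S(x), \dots, S^n(x)) \in A\}$. Then for every $g \in C_b(E)$, $$\lim_{n\to\infty}\int_{E^n} \left|\frac{1}{n}\sum_{i=1}^n g(x_i) - \int_E g\,d\nu\right|^2 d\mu_n(x_1,\dots,x_n) = 0.$$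
   Context: $\mathcal{B}(E)$ is the Borel $\sigma$-algebra; $S^k$ is the $k$-fold composition of $S$ and $S^{-k}A=(S^k)^{-1}(A)$; $\mathbb{N}=\{1,2,\dots\}$. $(E,\mathcal{B}(E),\mu,S)$ is asymptotically stationary with stationary limit $\nu$ if $\nu(A)=\lim_{k\to\infty}\mu(S^{-k}A)$ exists for all $A\in\mathcal{B}(E)$. $C_b(E)$ denotes the bounded continuous scalar-valued functions on $E$. *)

theory Defs
  imports "HOL-Probability.Probability"
begin

definition asymptotically_stationary ::
  "'a::topological_space measure \<Rightarrow> ('a \<Rightarrow> 'a) \<Rightarrow> 'a measure \<Rightarrow> bool" where
  "asymptotically_stationary \<mu> S \<nu> \<longleftrightarrow>
     sets \<nu> = sets borel \<and>
     (\<forall>A\<in>sets borel. (\<lambda>k. emeasure \<mu> ((S ^^ k) -` A)) \<longlonglongrightarrow> emeasure \<nu> A)"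

definition mu_n :: "'a::topological_space measure \<Rightarrow> ('a \<Rightarrow> 'a) \<Rightarrow> nat \<Rightarrow> (nat \<Rightarrow> 'a) measure" where
  "mu_n \<mu> S n = distr \<mu> (PiM {1..n} (\<lambda>_. borel)) (\<lambda>x. \<lambda>i\<in>{1..n}. (S ^^ i) x)"

end

theory Submission
  imports Defs
begin

text \<open>
  Pushing mu_n forward to mu turns the integral into the mean square
  E[(1/n sum_{i<=n} g(S^i x) - c)^2] = 1/n^2 sum_{i,j<=n} a_ij, where c is the nu-integral of g,
  m_i = E[g(S^i x)] and a_ij = Cov(g o S^i, g o S^j) + (m_i - c)(m_j - c).
  Asymptotic stationarity is setwise convergence of the laws of S^i to nu, so m_i tends to c for
  bounded Borel g, by uniform approximation with simple functions. The mixing hypothesis says that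
  Cov(1_A o S^i, 1_A o S^(i+k)) tends to 0 as k grows, uniformly in i; polarisation over the
  disjoint level sets of a simple function and uniform approximation carry this over to g.
  Hence a_ij is small off a band of bounded width around the diagonal and off finitely many rows
  and columns, and the double Cesaro average tends to 0. Continuity of g, the metric and
  separability are used only through Borel measurability.
\<close>

section \<open>Uniform limits and double averages\<close>

lemma uniform_limit_approximable:
  fixes a :: "'n \<Rightarrow> 'i \<Rightarrow> 'b::metric_space"
  assumes "\<And>e. e > 0 \<Longrightarrow> \<exists>b m. uniform_limit I b m F \<and> (\<forall>x\<in>I. dist (l x) (m x) \<le> e)
             \<and> (\<forall>n. \<forall>x\<in>I. dist (a n x) (b n x) \<le> e)"
  shows "uniform_limit I a l F"
proof (rule uniform_limitI)
  fix e :: real assume "e > 0"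
  then obtain b m where b: "uniform_limit I b m F" and lm: "\<forall>x\<in>I. dist (l x) (m x) \<le> e / 3"
    and ab: "\<forall>n. \<forall>x\<in>I. dist (a n x) (b n x) \<le> e / 3"
    using assms[of "e / 3"] by auto
  have "\<forall>\<^sub>F n in F. \<forall>x\<in>I. dist (b n x) (m x) < e / 3"
    using uniform_limitD[OF b, of "e / 3"] \<open>e > 0\<close> by linarith
  then show "\<forall>\<^sub>F n in F. \<forall>x\<in>I. dist (a n x) (l x) < e"
  proof (rule eventually_mono, intro ballI)
    fix n x assume "\<forall>x\<in>I. dist (b n x) (m x) < e / 3" and "x \<in> I"
    then have "dist (b n x) (m x) < e / 3" "dist (a n x) (b n x) \<le> e / 3" "dist (l x) (m x) \<le> e / 3"
      using lm ab by auto
    moreover have "dist (a n x) (l x) \<le> dist (a n x) (b n x) + dist (b n x) (m x) + dist (l x) (m x)"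
      using dist_triangle[of "a n x" "l x" "b n x"] dist_triangle[of "b n x" "l x" "m x"]
      by (simp add: dist_commute)
    ultimately show "dist (a n x) (l x) < e" by linarith
  qed
qed

lemma tendsto_approximable:
  fixes a :: "'n \<Rightarrow> 'b::metric_space"
  assumes "\<And>e. e > 0 \<Longrightarrow> \<exists>b m. (b \<longlongrightarrow> m) F \<and> dist l m \<le> e \<and> (\<forall>n. dist (a n) (b n) \<le> e)"
  shows "(a \<longlongrightarrow> l) F"
proof -
  have "uniform_limit {()} (\<lambda>n _. a n) (\<lambda>_. l) F"
  proof (rule uniform_limit_approximable)
    fix e :: real assume "e > 0"
    then obtain b m where "(b \<longlongrightarrow> m) F" "dist l m \<le> e" "\<forall>n. dist (a n) (b n) \<le> e"
      using assms by blast
    then show "\<exists>b m. uniform_limit {()} b m F \<and> (\<forall>x\<in>{()}. dist l (m x) \<le> e)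
        \<and> (\<forall>n. \<forall>x\<in>{()}. dist (a n) (b n x) \<le> e)"
      by (intro exI[of _ "\<lambda>n _. b n"] exI[of _ "\<lambda>_. m"]) simp
  qed
  then show ?thesis by simp
qed

lemma uniform_limit_null_SUP:
  fixes f :: "'n \<Rightarrow> 'i \<Rightarrow> real"
  assumes "\<And>n. bdd_above ((\<lambda>x. \<bar>f n x\<bar>) ` I)" and "((\<lambda>n. SUP x\<in>I. \<bar>f n x\<bar>) \<longlongrightarrow> 0) F"
  shows "uniform_limit I f (\<lambda>_. 0) F"
proof (rule uniform_limitI)
  fix e :: real assume "e > 0"
  from order_tendstoD(2)[OF assms(2) this]
  show "\<forall>\<^sub>F n in F. \<forall>x\<in>I. dist (f n x) 0 < e"
  proof (rule eventually_mono, intro ballI)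
    fix n x assume "(SUP x\<in>I. \<bar>f n x\<bar>) < e" and "x \<in> I"
    then show "dist (f n x) 0 < e"
      using cSUP_upper[OF \<open>x \<in> I\<close> assms(1)[of n]] by simp
  qed
qed

lemma uniform_limit_null_cmult:
  fixes f :: "'n \<Rightarrow> 'i \<Rightarrow> real"
  assumes "uniform_limit I f (\<lambda>_. 0) F"
  shows "uniform_limit I (\<lambda>n x. c * f n x) (\<lambda>_. 0) F"
  using bounded_linear.uniform_limit[OF bounded_linear_mult_right assms, of c] by simp

lemma uniform_limit_null_sum:
  fixes f :: "'j \<Rightarrow> 'n \<Rightarrow> 'i \<Rightarrow> 'b::real_normed_vector"
  assumes "finite J" and "\<And>j. j \<in> J \<Longrightarrow> uniform_limit I (f j) (\<lambda>_. 0) F"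
  shows "uniform_limit I (\<lambda>n x. \<Sum>j\<in>J. f j n x) (\<lambda>_. 0) F"
  using assms
proof (induction J rule: finite_induct)
  case (insert j J)
  then show ?case
    using uniform_limit_add[OF insert.prems[of j]] by simp
qed (simp add: uniform_limit_const)

lemma sum_near_diagonal_le:
  fixes n K :: nat
  shows "(\<Sum>i=1..n. \<Sum>j=1..n. (if i < K \<or> j < K \<or> (i < j + K \<and> j < i + K) then 1 else 0 :: real))
    \<le> 4 * K * n"
proof -
  have row: "(\<Sum>j=1..n. (if i < K \<or> j < K \<or> (i < j + K \<and> j < i + K) then 1 else 0 :: real))
      \<le> (if i < K then real n else 0) + 3 * real K" for i
  proof (cases "i < K")
    case True
    then show ?thesis by (simp add: sum_bounded_above[where K=1, simplified])
  next
    case False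
    have "card {j\<in>{1..n}. j < K \<or> (i < j + K \<and> j < i + K)} \<le> card ({..<K} \<union> {i - K..<i + K})"
      by (intro card_mono) auto
    also have "\<dots> \<le> card {..<K} + card {i - K..<i + K}"
      by (rule card_Un_le)
    also have "\<dots> \<le> 3 * K" by simp
    finally show ?thesis using False by (simp add: sum.inter_filter[symmetric])
  qed
  have "card {i\<in>{1..n}. i < K} \<le> card {..<K}"
    by (intro card_mono) auto
  then have "(\<Sum>i=1..n. (if i < K then real n else 0)) \<le> n * K"
    by (simp add: sum.inter_filter[symmetric] mult.commute[of "real n"] mult_right_mono)
  then have "(\<Sum>i=1..n. (if i < K then real n else 0) + 3 * real K) \<le> 4 * K * n"
    by (simp add: sum.distrib algebra_simps)
  moreover have "(\<Sum>i=1..n. \<Sum>j=1..n. (if i < K \<or> j < K \<or> (i < j + K \<and> j < i + K) then 1 else 0 :: real))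
      \<le> (\<Sum>i=1..n. (if i < K then real n else 0) + 3 * real K)"
    by (intro sum_mono row)
  ultimately show ?thesis by linarith
qed

lemma double_average_tendsto_zero:
  fixes a :: "nat \<Rightarrow> nat \<Rightarrow> real"
  assumes bound: "\<And>i j. \<bar>a i j\<bar> \<le> B"
    and small: "\<And>e. e > 0 \<Longrightarrow> \<exists>K. \<forall>i j. K \<le> i \<longrightarrow> K \<le> j \<longrightarrow> (i + K \<le> j \<or> j + K \<le> i) \<longrightarrow> \<bar>a i j\<bar> \<le> e"
  shows "(\<lambda>n. (\<Sum>i=1..n. \<Sum>j=1..n. a i j) / (real n)\<^sup>2) \<longlonglongrightarrow> 0"
proof (rule LIMSEQ_I)
  fix r :: real assume "r > 0"
  define e where "e = r / 2"
  have "e > 0" using \<open>r > 0\<close> by (simp add: e_def)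
  then obtain K where K: "\<And>i j. K \<le> i \<Longrightarrow> K \<le> j \<Longrightarrow> i + K \<le> j \<or> j + K \<le> i \<Longrightarrow> \<bar>a i j\<bar> \<le> e"
    using small by blast
  have "B \<ge> 0" using bound[of 0 0] by linarith
  obtain n0 :: nat where n0: "4 * K * B / e < n0" using reals_Archimedean2 by blast
  have entry: "\<bar>a i j\<bar> \<le> e + B * (if i < K \<or> j < K \<or> (i < j + K \<and> j < i + K) then 1 else 0)" for i j
    using K[of i j] bound[of i j] \<open>e > 0\<close> \<open>B \<ge> 0\<close> by (cases "i < K \<or> j < K \<or> (i < j + K \<and> j < i + K)") auto
  have "\<bar>(\<Sum>i=1..n. \<Sum>j=1..n. a i j) / (real n)\<^sup>2\<bar> < r" if n: "n \<ge> max 1 n0" for n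
  proof -
    have "n > 0" "4 * K * B < e * n"
      using n n0 \<open>e > 0\<close> by (auto simp: field_simps intro: less_le_trans)
    have "\<bar>\<Sum>i=1..n. \<Sum>j=1..n. a i j\<bar> \<le> (\<Sum>i=1..n. \<Sum>j=1..n. \<bar>a i j\<bar>)"
      by (rule order_trans[OF sum_abs]) (intro sum_mono sum_abs)
    also have "\<dots> \<le> (\<Sum>i=1..n. \<Sum>j=1..n. e + B * (if i < K \<or> j < K \<or> (i < j + K \<and> j < i + K) then 1 else 0))"
      by (intro sum_mono entry)
    also have "\<dots> = n * n * e
        + B * (\<Sum>i=1..n. \<Sum>j=1..n. (if i < K \<or> j < K \<or> (i < j + K \<and> j < i + K) then 1 else 0))"
      by (simp add: sum.distrib sum_distrib_left)
    also have "\<dots> \<le> n * n * e + B * (4 * K * n)"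
      using sum_near_diagonal_le \<open>B \<ge> 0\<close> by (intro add_left_mono mult_left_mono) auto
    also have "\<dots> < n * n * e + n * n * e"
      using mult_strict_right_mono[OF \<open>4 * K * B < e * n\<close>, of n] \<open>n > 0\<close>
      by (simp add: algebra_simps)
    also have "\<dots> = n * n * r" by (simp add: e_def)
    finally show ?thesis
      using \<open>n > 0\<close> by (simp add: abs_div power2_eq_square divide_less_eq mult.commute)
  qed
  then show "\<exists>n0. \<forall>n\<ge>n0. norm ((\<Sum>i=1..n. \<Sum>j=1..n. a i j) / (real n)\<^sup>2 - 0) < r"
    by (metis diff_zero real_norm_def)
qed

section \<open>Bounded Borel functions and setwise convergence\<close>

definition bounded_borel :: "('a::topological_space \<Rightarrow> real) \<Rightarrow> bool" where
  "bounded_borel f \<longleftrightarrow> f \<in> borel_measurable borel \<and> bounded (range f)"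

lemma bounded_borelE:
  assumes "bounded_borel f"
  obtains B where "f \<in> borel_measurable borel" and "\<And>x. \<bar>f x\<bar> \<le> B"
  using assms unfolding bounded_borel_def bounded_iff by auto

lemma bounded_borelI:
  assumes "f \<in> borel_measurable borel" and "\<And>x. \<bar>f x\<bar> \<le> B"
  shows "bounded_borel f"
  using assms unfolding bounded_borel_def bounded_iff by auto

lemma bounded_borel_indicator:
  assumes "A \<in> sets borel"
  shows "bounded_borel (indicator A)"
  using assms by (intro bounded_borelI[where B=1]) (auto simp: indicator_def)

lemma bounded_borel_cmult_indicator:
  assumes "A \<in> sets borel"
  shows "bounded_borel (\<lambda>x. c * indicator A x)"
  using assms by (intro bounded_borelI[where B="\<bar>c\<bar>"]) (auto simp: indicator_def)

lemma bounded_borel_add: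
  assumes "bounded_borel f" and "bounded_borel h"
  shows "bounded_borel (\<lambda>x. f x + h x)"
proof -
  obtain B C where "f \<in> borel_measurable borel" "h \<in> borel_measurable borel"
    and "\<And>x. \<bar>f x\<bar> \<le> B" "\<And>x. \<bar>h x\<bar> \<le> C"
    using assms by (elim bounded_borelE) blast
  then show ?thesis
    by (intro bounded_borelI[where B="B + C"]) (auto intro: abs_triangle_ineq[THEN order_trans] add_mono)
qed

lemma bounded_borel_diff_const:
  assumes "bounded_borel f"
  shows "bounded_borel (\<lambda>x. f x - c)"
proof -
  obtain B where "f \<in> borel_measurable borel" and "\<And>x. \<bar>f x\<bar> \<le> B"
    using assms by (elim bounded_borelE) blast
  then show ?thesis
    by (intro bounded_borelI[where B="B + \<bar>c\<bar>"]) (auto intro: abs_triangle_ineq4[THEN order_trans])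
qed

lemma integrable_bounded_borel:
  fixes M :: "'a::topological_space measure"
  assumes "sets M = sets borel" and "bounded_borel f" and "finite_measure M"
  shows "integrable M f"
proof -
  interpret finite_measure M by fact
  obtain B where "f \<in> borel_measurable borel" and "\<And>x. \<bar>f x\<bar> \<le> B"
    using assms(2) by (elim bounded_borelE) blast
  then show ?thesis
    using measurable_cong_sets[OF assms(1) refl] by (intro integrable_const_bound[where B=B]) auto
qed

lemma (in prob_space) abs_integral_diff_le:
  fixes f g :: "'a \<Rightarrow> real"
  assumes "integrable M f" and "integrable M g" and "\<And>x. x \<in> space M \<Longrightarrow> \<bar>f x - g x\<bar> \<le> d"
  shows "\<bar>(\<integral>x. f x \<partial>M) - (\<integral>x. g x \<partial>M)\<bar> \<le> d"
proof -
  have "integrable M (\<lambda>x. f x - g x)"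
    using assms by simp
  moreover have "- d \<le> f x - g x" and "f x - g x \<le> d" if "x \<in> space M" for x
    using assms(3)[OF that] by (simp_all add: abs_le_iff)
  ultimately have "- d \<le> (\<integral>x. f x - g x \<partial>M)" and "(\<integral>x. f x - g x \<partial>M) \<le> d"
    by (auto intro!: integral_ge_const integral_le_const AE_I2)
  moreover have "(\<integral>x. f x - g x \<partial>M) = (\<integral>x. f x \<partial>M) - (\<integral>x. g x \<partial>M)"
    using assms(1,2) by (rule Bochner_Integration.integral_diff)
  ultimately show ?thesis by linarith
qed

lemma abs_sub_floor_multiple_le:
  fixes d y :: real
  assumes "d > 0"
  shows "\<bar>y - d * \<lfloor>y / d\<rfloor>\<bar> \<le> d"
proof -
  have "of_int \<lfloor>y / d\<rfloor> \<le> y / d" "y / d < of_int \<lfloor>y / d\<rfloor> + 1"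
    by linarith+
  then have "of_int \<lfloor>y / d\<rfloor> * d \<le> y" "y < (of_int \<lfloor>y / d\<rfloor> + 1) * d"
    by (simp_all only: pos_le_divide_eq[OF assms] pos_divide_less_eq[OF assms])
  then show ?thesis by (simp add: algebra_simps)
qed

lemma simple_function_floor_multiple:
  fixes g :: "'a::topological_space \<Rightarrow> real"
  assumes "bounded_borel g" and "d > 0"
  shows "simple_function borel (\<lambda>x. d * \<lfloor>g x / d\<rfloor>)"
proof (rule simple_function_borel_measurable)
  obtain B where [measurable]: "g \<in> borel_measurable borel" and B: "\<And>x. \<bar>g x\<bar> \<le> B"
    using assms(1) by (elim bounded_borelE) blast
  show "(\<lambda>x. d * \<lfloor>g x / d\<rfloor>) \<in> borel_measurable borel"
    by measurable
  have "range (\<lambda>x. \<lfloor>g x / d\<rfloor>) \<subseteq> {\<lfloor>- B / d\<rfloor>..\<lfloor>B / d\<rfloor>}"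
  proof
    fix j assume "j \<in> range (\<lambda>x. \<lfloor>g x / d\<rfloor>)"
    then obtain x where j: "j = \<lfloor>g x / d\<rfloor>" by auto
    have "- B \<le> g x" "g x \<le> B"
      using B[of x] by auto
    then have "- B / d \<le> g x / d" "g x / d \<le> B / d"
      using divide_right_mono[of "- B" "g x" d] divide_right_mono[of "g x" B d] assms(2) by simp_all
    then show "j \<in> {\<lfloor>- B / d\<rfloor>..\<lfloor>B / d\<rfloor>}"
      unfolding j by (auto intro: floor_mono)
  qed
  then have "finite (range (\<lambda>x. \<lfloor>g x / d\<rfloor>))"
    by (rule finite_subset) simp
  from finite_imageI[OF this, of "\<lambda>j. d * of_int j"]
  show "finite ((\<lambda>x. d * \<lfloor>g x / d\<rfloor>) ` space borel)"
    by (simp add: image_image)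
qed

lemma simple_function_bounded_borel:
  fixes f :: "'a::topological_space \<Rightarrow> real"
  assumes "simple_function borel f"
  shows "bounded_borel f"
  using borel_measurable_simple_function[OF assms] finite_imp_bounded[OF simple_functionD(1)[OF assms]]
  unfolding bounded_borel_def by simp

lemma simple_function_borel_sum_indicator:
  fixes f :: "'a::topological_space \<Rightarrow> real"
  assumes "simple_function borel f"
  shows "f x = (\<Sum>y\<in>range f. y * indicator (f -` {y}) x)"
proof -
  have "f x = (\<Sum>y\<in>range f. indicator (f -` {y}) x *\<^sub>R y)"
    using simple_function_indicator_representation_banach[OF assms, of x]
    unfolding space_borel Int_UNIV_right by (simp only: UNIV_I simp_thms)
  also have "\<dots> = (\<Sum>y\<in>range f. y * indicator (f -` {y}) x)"
    by (simp add: mult.commute)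
  finally show ?thesis .
qed

lemma integral_simple_function_borel:
  fixes f :: "'a::topological_space \<Rightarrow> real"
  assumes "finite_measure P" and "sets P = sets borel" and f: "simple_function borel f"
  shows "(\<integral>x. f x \<partial>P) = (\<Sum>y\<in>range f. y * measure P (f -` {y}))"
proof -
  interpret finite_measure P by fact
  have sets: "f -` {y} \<in> sets P" for y
    using simple_functionD(2)[OF f, of "{y}"] assms(2) by simp
  have "(\<integral>x. f x \<partial>P) = (\<integral>x. (\<Sum>y\<in>range f. y * indicator (f -` {y}) x) \<partial>P)"
    by (subst simple_function_borel_sum_indicator[OF f]) simp
  also have "\<dots> = (\<Sum>y\<in>range f. \<integral>x. y * indicator (f -` {y}) x \<partial>P)"
    using sets by (intro Bochner_Integration.integral_sum integrable_mult_right integrable_real_indicator)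
      (auto simp: less_top[symmetric])
  also have "\<dots> = (\<Sum>y\<in>range f. y * measure P (f -` {y}))"
    using sets by (simp add: sets.Int_space_eq2)
  finally show ?thesis .
qed

lemma tendsto_integral_setwise:
  fixes P :: "nat \<Rightarrow> 'a::topological_space measure"
  assumes P: "\<And>k. prob_space (P k)" "\<And>k. sets (P k) = sets borel"
    and \<nu>: "prob_space \<nu>" "sets \<nu> = sets borel"
    and setwise: "\<And>A. A \<in> sets borel \<Longrightarrow> (\<lambda>k. measure (P k) A) \<longlonglongrightarrow> measure \<nu> A"
    and g: "bounded_borel g"
  shows "(\<lambda>k. \<integral>x. g x \<partial>P k) \<longlonglongrightarrow> (\<integral>x. g x \<partial>\<nu>)"
proof (rule tendsto_approximable)
  fix d :: real assume "d > 0"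
  define f where "f x = d * \<lfloor>g x / d\<rfloor>" for x
  have f: "simple_function borel f"
    unfolding f_def using g \<open>d > 0\<close> by (rule simple_function_floor_multiple)
  have close: "\<bar>g x - f x\<bar> \<le> d" for x
    unfolding f_def using \<open>d > 0\<close> by (rule abs_sub_floor_multiple_le)
  have "(\<lambda>k. \<Sum>y\<in>range f. y * measure (P k) (f -` {y})) \<longlonglongrightarrow> (\<Sum>y\<in>range f. y * measure \<nu> (f -` {y}))"
    using simple_functionD(2)[OF f] by (intro tendsto_intros setwise) simp
  then have "(\<lambda>k. \<integral>x. f x \<partial>P k) \<longlonglongrightarrow> (\<integral>x. f x \<partial>\<nu>)"
    using integral_simple_function_borel[OF prob_space.finite_measure _ f] P \<nu> by simp
  moreover have approx: "\<bar>(\<integral>x. g x \<partial>Q) - (\<integral>x. f x \<partial>Q)\<bar> \<le> d"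
    if "prob_space Q" "sets Q = sets borel" for Q
  proof (rule prob_space.abs_integral_diff_le[OF \<open>prob_space Q\<close>])
    show "integrable Q g" "integrable Q f"
      using that g simple_function_bounded_borel[OF f]
      by (auto intro: integrable_bounded_borel prob_space.finite_measure)
  qed (rule close)
  ultimately show "\<exists>b m. b \<longlonglongrightarrow> m \<and> dist (\<integral>x. g x \<partial>\<nu>) m \<le> d
      \<and> (\<forall>k. dist (\<integral>x. g x \<partial>P k) (b k) \<le> d)"
    using approx[OF \<nu>] approx[OF P] by (auto simp: dist_real_def)
qed

section \<open>Covariances along an orbit\<close>

lemma abs_mult_diff_le:
  fixes a b a' b' B d :: real
  assumes "\<bar>a\<bar> \<le> B" "\<bar>b\<bar> \<le> B" "\<bar>a - a'\<bar> \<le> d" "\<bar>b - b'\<bar> \<le> d"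
  shows "\<bar>a * b - a' * b'\<bar> \<le> d * (2 * B + d)"
proof -
  have "a * b - a' * b' = a * (b - b') + (a - a') * b'"
    by (simp add: algebra_simps)
  moreover have "\<bar>a * (b - b')\<bar> \<le> B * d"
    unfolding abs_mult using assms by (intro mult_mono) auto
  moreover have "\<bar>(a - a') * b'\<bar> \<le> d * (B + d)"
    unfolding abs_mult using assms by (intro mult_mono) auto
  ultimately show ?thesis
    by (simp add: algebra_simps)
qed

locale borel_dynamics = prob_space M for M :: "'a::topological_space measure" +
  fixes S :: "'a \<Rightarrow> 'a"
  assumes sets_M: "sets M = sets borel" and S_measurable: "S \<in> borel_measurable borel"
begin

lemma space_M [simp]: "space M = UNIV"
  using sets_eq_imp_space_eq[OF sets_M] by simp

lemma measurable_funpow_S [measurable]: "S ^^ i \<in> measurable M borel"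
  using measurable_compose_n[OF S_measurable] measurable_cong_sets[OF sets_M refl] by blast

lemma integrable_orbit:
  assumes "bounded_borel f"
  shows "integrable M (\<lambda>x. f ((S ^^ i) x))"
proof -
  obtain B where [measurable]: "f \<in> borel_measurable borel" and "\<And>x. \<bar>f x\<bar> \<le> B"
    using assms by (elim bounded_borelE) blast
  then show ?thesis
    by (intro integrable_const_bound[where B=B]) auto
qed

lemma integrable_orbit_mult:
  assumes "bounded_borel f" and "bounded_borel h"
  shows "integrable M (\<lambda>x. f ((S ^^ i) x) * h ((S ^^ j) x))"
proof -
  obtain B C where [measurable]: "f \<in> borel_measurable borel" "h \<in> borel_measurable borel"
    and "\<And>x. \<bar>f x\<bar> \<le> B" "\<And>x. \<bar>h x\<bar> \<le> C"
    using assms by (elim bounded_borelE) blast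
  then have "\<bar>f y * h z\<bar> \<le> B * C" for y z
    unfolding abs_mult by (intro mult_mono) (auto intro: order_trans[OF abs_ge_zero])
  then show ?thesis
    by (intro integrable_const_bound[where B="B * C"]) auto
qed

definition orbit_cov :: "nat \<Rightarrow> nat \<Rightarrow> ('a \<Rightarrow> real) \<Rightarrow> ('a \<Rightarrow> real) \<Rightarrow> real" where
  "orbit_cov i j f h = (\<integral>x. f ((S ^^ i) x) * h ((S ^^ j) x) \<partial>M)
     - (\<integral>x. f ((S ^^ i) x) \<partial>M) * (\<integral>x. h ((S ^^ j) x) \<partial>M)"

lemma orbit_cov_commute: "orbit_cov i j f h = orbit_cov j i h f"
  unfolding orbit_cov_def by (simp add: mult.commute)

lemma orbit_cov_cmult_left: "orbit_cov i j (\<lambda>x. c * f x) h = c * orbit_cov i j f h"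
  unfolding orbit_cov_def by (simp add: algebra_simps)

lemma orbit_cov_cmult_right: "orbit_cov i j f (\<lambda>x. c * h x) = c * orbit_cov i j f h"
  unfolding orbit_cov_commute[of i j f] orbit_cov_commute[of i j f h] by (rule orbit_cov_cmult_left)

lemma orbit_cov_add_left:
  assumes "bounded_borel f" "bounded_borel f'" "bounded_borel h"
  shows "orbit_cov i j (\<lambda>x. f x + f' x) h = orbit_cov i j f h + orbit_cov i j f' h"
  using integrable_orbit[OF assms(1)] integrable_orbit[OF assms(2)]
    integrable_orbit_mult[OF assms(1,3)] integrable_orbit_mult[OF assms(2,3)]
  unfolding orbit_cov_def by (simp add: distrib_right)

lemma orbit_cov_add_right:
  assumes "bounded_borel f" "bounded_borel h" "bounded_borel h'"
  shows "orbit_cov i j f (\<lambda>x. h x + h' x) = orbit_cov i j f h + orbit_cov i j f h'"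
  unfolding orbit_cov_commute[of i j f] by (rule orbit_cov_add_left[OF assms(2,3,1)])

lemma orbit_cov_sum_left:
  assumes "finite L" and "\<And>l. l \<in> L \<Longrightarrow> bounded_borel (f l)" and "bounded_borel h"
  shows "orbit_cov i j (\<lambda>x. \<Sum>l\<in>L. f l x) h = (\<Sum>l\<in>L. orbit_cov i j (f l) h)"
proof -
  have "(\<integral>x. (\<Sum>l\<in>L. f l ((S ^^ i) x)) * h ((S ^^ j) x) \<partial>M)
      = (\<Sum>l\<in>L. \<integral>x. f l ((S ^^ i) x) * h ((S ^^ j) x) \<partial>M)"
    unfolding sum_distrib_right
    using assms by (intro Bochner_Integration.integral_sum integrable_orbit_mult)
  moreover have "(\<integral>x. (\<Sum>l\<in>L. f l ((S ^^ i) x)) \<partial>M) = (\<Sum>l\<in>L. \<integral>x. f l ((S ^^ i) x) \<partial>M)"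
    using assms by (intro Bochner_Integration.integral_sum integrable_orbit)
  ultimately show ?thesis
    unfolding orbit_cov_def by (simp add: sum_distrib_right sum_subtractf)
qed

lemma orbit_cov_sum_right:
  assumes "finite L" and "bounded_borel f" and "\<And>l. l \<in> L \<Longrightarrow> bounded_borel (h l)"
  shows "orbit_cov i j f (\<lambda>x. \<Sum>l\<in>L. h l x) = (\<Sum>l\<in>L. orbit_cov i j f (h l))"
  unfolding orbit_cov_commute[of i j f] by (rule orbit_cov_sum_left[OF assms(1,3,2)])

lemma orbit_cov_indicator:
  assumes "A \<in> sets borel" and "B \<in> sets borel"
  shows "orbit_cov i j (indicator A) (indicator B)
    = measure M ((S ^^ i) -` A \<inter> (S ^^ j) -` B) - measure M ((S ^^ i) -` A) * measure M ((S ^^ j) -` B)"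
proof -
  have "(\<lambda>x. indicator A ((S ^^ i) x) * indicator B ((S ^^ j) x))
      = (indicator ((S ^^ i) -` A \<inter> (S ^^ j) -` B) :: 'a \<Rightarrow> real)"
    by (auto simp: indicator_def)
  moreover have "(\<lambda>x. indicator A ((S ^^ k) x)) = (indicator ((S ^^ k) -` A) :: 'a \<Rightarrow> real)" for k A
    by (auto simp: indicator_def)
  ultimately show ?thesis
    unfolding orbit_cov_def by simp
qed

lemma orbit_cov_approx:
  assumes g: "bounded_borel g" and f: "bounded_borel f"
    and B: "\<And>x. \<bar>g x\<bar> \<le> B" and d: "\<And>x. \<bar>g x - f x\<bar> \<le> d"
  shows "\<bar>orbit_cov i j g g - orbit_cov i j f f\<bar> \<le> 2 * (d * (2 * B + d))"
proof -
  have mean: "\<bar>\<integral>x. g ((S ^^ k) x) \<partial>M\<bar> \<le> B" for k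
    using abs_integral_diff_le[OF integrable_orbit[OF g, of k] integrable_zero, of B] B by simp
  have mean_diff: "\<bar>(\<integral>x. g ((S ^^ k) x) \<partial>M) - (\<integral>x. f ((S ^^ k) x) \<partial>M)\<bar> \<le> d" for k
    using integrable_orbit[OF g] integrable_orbit[OF f] d by (rule abs_integral_diff_le)
  have "\<bar>(\<integral>x. g ((S ^^ i) x) * g ((S ^^ j) x) \<partial>M) - (\<integral>x. f ((S ^^ i) x) * f ((S ^^ j) x) \<partial>M)\<bar>
      \<le> d * (2 * B + d)"
    using integrable_orbit_mult[OF g g] integrable_orbit_mult[OF f f]
    by (rule abs_integral_diff_le) (intro abs_mult_diff_le B d)
  moreover have "\<bar>(\<integral>x. g ((S ^^ i) x) \<partial>M) * (\<integral>x. g ((S ^^ j) x) \<partial>M)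
      - (\<integral>x. f ((S ^^ i) x) \<partial>M) * (\<integral>x. f ((S ^^ j) x) \<partial>M)\<bar> \<le> d * (2 * B + d)"
    by (intro abs_mult_diff_le mean mean_diff)
  ultimately show ?thesis
    unfolding orbit_cov_def by linarith
qed

definition decorrelating :: "('a \<Rightarrow> real) \<Rightarrow> bool" where
  "decorrelating f \<longleftrightarrow> uniform_limit {1..} (\<lambda>k i. orbit_cov i (i + k) f f) (\<lambda>_. 0) sequentially"

lemma decorrelating_indicatorI:
  assumes A: "A \<in> sets borel"
    and "(\<lambda>k. SUP i\<in>{1::nat..}. \<bar>measure M ((S ^^ i) -` A \<inter> (S ^^ k) -` ((S ^^ i) -` A))
           - measure M ((S ^^ i) -` A) * measure M ((S ^^ k) -` ((S ^^ i) -` A))\<bar>) \<longlonglongrightarrow> 0"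
  shows "decorrelating (indicator A)"
proof -
  have "(S ^^ k) -` ((S ^^ i) -` A) = (S ^^ (i + k)) -` A" for i k
    by (auto simp: funpow_add)
  then have cov: "\<bar>measure M ((S ^^ i) -` A \<inter> (S ^^ k) -` ((S ^^ i) -` A))
      - measure M ((S ^^ i) -` A) * measure M ((S ^^ k) -` ((S ^^ i) -` A))\<bar>
      = \<bar>orbit_cov i (i + k) (indicator A) (indicator A)\<bar>" for i k
    by (simp add: orbit_cov_indicator[OF A A])
  have "\<bar>orbit_cov i j (indicator A) (indicator A)\<bar> \<le> 2" for i j
  proof -
    have "\<bar>measure M X * measure M Y\<bar> \<le> 1" for X Y
      by (simp add: abs_mult mult_le_one)
    then show ?thesis
      unfolding orbit_cov_indicator[OF A A]
      using measure_nonneg[of M "(S ^^ i) -` A \<inter> (S ^^ j) -` A"] prob_le_1[of "(S ^^ i) -` A \<inter> (S ^^ j) -` A"]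
      by (smt (verit))
  qed
  then show ?thesis
    unfolding decorrelating_def using assms(2) unfolding cov
    by (intro uniform_limit_null_SUP bdd_aboveI2)
qed

text \<open>The hypothesis only controls the covariance of an indicator with itself; for disjoint
  sets the symmetrised mixed covariance is reduced to such diagonal terms by polarisation.\<close>

lemma uniform_limit_orbit_cov_indicator_pair:
  assumes mixing: "\<And>A. A \<in> sets borel \<Longrightarrow> decorrelating (indicator A)"
    and A: "A \<in> sets borel" and B: "B \<in> sets borel" and AB: "A \<inter> B = {} \<or> A = B"
  shows "uniform_limit {1..}
    (\<lambda>k i. orbit_cov i (i + k) (indicator A) (indicator B) + orbit_cov i (i + k) (indicator B) (indicator A))
    (\<lambda>_. 0) sequentially"
  using AB
proof
  assume "A = B"
  then show ?thesis
    using uniform_limit_add[OF mixing[OF A, unfolded decorrelating_def] mixing[OF A, unfolded decorrelating_def]]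
    by simp
next
  assume "A \<inter> B = {}"
  then have "indicator (A \<union> B) = (\<lambda>x. indicator A x + indicator B x :: real)"
    by (auto simp: indicator_def fun_eq_iff)
  then have "orbit_cov i j (indicator A) (indicator B) + orbit_cov i j (indicator B) (indicator A)
      = orbit_cov i j (indicator (A \<union> B)) (indicator (A \<union> B))
        - orbit_cov i j (indicator A) (indicator A) - orbit_cov i j (indicator B) (indicator B)" for i j
    using A B by (simp add: orbit_cov_add_left orbit_cov_add_right bounded_borel_indicator bounded_borel_add)
  moreover have "uniform_limit {1..}
      (\<lambda>k i. orbit_cov i (i + k) (indicator (A \<union> B)) (indicator (A \<union> B))
        - orbit_cov i (i + k) (indicator A) (indicator A) - orbit_cov i (i + k) (indicator B) (indicator B))
      (\<lambda>_. 0) sequentially"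
    using uniform_limit_minus[OF uniform_limit_minus, OF mixing[OF sets.Un[OF A B], unfolded decorrelating_def]
        mixing[OF A, unfolded decorrelating_def] mixing[OF B, unfolded decorrelating_def]]
    by simp
  ultimately show ?thesis by simp
qed

lemma decorrelating_simple_function:
  assumes mixing: "\<And>A. A \<in> sets borel \<Longrightarrow> decorrelating (indicator A)"
    and f: "simple_function borel f"
  shows "decorrelating f"
proof -
  define A where "A y = f -` {y}" for y
  define C where "C i j y z = orbit_cov i j (indicator (A y)) (indicator (A z))" for i j y z
  have Y: "finite (range f)"
    using simple_functionD(1)[OF f] by simp
  have A: "A y \<in> sets borel" for y
    using simple_functionD(2)[OF f, of "{y}"] by (simp add: A_def)
  have f_eq: "f = (\<lambda>x. \<Sum>y\<in>range f. y * indicator (A y) x)"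
    unfolding A_def by (rule ext, rule simple_function_borel_sum_indicator[OF f])
  have fb: "bounded_borel f"
    using f by (rule simple_function_bounded_borel)
  have "orbit_cov i j f f = (\<Sum>y\<in>range f. orbit_cov i j (\<lambda>x. y * indicator (A y) x) f)" for i j
    by (rule orbit_cov_sum_left[of "range f" "\<lambda>y x. y * indicator (A y) x" f i j, folded f_eq])
      (use Y A fb bounded_borel_cmult_indicator in auto)
  also have "\<dots> i j = (\<Sum>y\<in>range f. \<Sum>z\<in>range f.
      orbit_cov i j (\<lambda>x. y * indicator (A y) x) (\<lambda>x. z * indicator (A z) x))" for i j
    by (intro sum.cong refl orbit_cov_sum_right[of "range f" _ "\<lambda>z x. z * indicator (A z) x", folded f_eq])
      (use Y A bounded_borel_cmult_indicator in auto)
  finally have "orbit_cov i j f f = (\<Sum>y\<in>range f. \<Sum>z\<in>range f. y * z * C i j y z)" for i j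
    by (simp add: C_def orbit_cov_cmult_left orbit_cov_cmult_right mult.assoc)
  moreover have "(\<Sum>y\<in>range f. \<Sum>z\<in>range f. y * z * C i j z y)
      = (\<Sum>y\<in>range f. \<Sum>z\<in>range f. y * z * C i j y z)" for i j
    by (subst sum.swap) (simp only: mult.commute)
  ultimately have cov_eq: "orbit_cov i j f f
      = 1 / 2 * (\<Sum>y\<in>range f. \<Sum>z\<in>range f. y * z * (C i j y z + C i j z y))" for i j
    by (simp only: distrib_left sum.distrib)
  have "A y \<inter> A z = {} \<or> A y = A z" for y z
    by (auto simp: A_def)
  then have "uniform_limit {1..} (\<lambda>k i. \<Sum>y\<in>range f. \<Sum>z\<in>range f.
      y * z * (C i (i + k) y z + C i (i + k) z y)) (\<lambda>_. 0) sequentially"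
    unfolding C_def
    by (intro uniform_limit_null_sum uniform_limit_null_cmult Y
        uniform_limit_orbit_cov_indicator_pair[OF mixing A A])
  then show ?thesis
    unfolding decorrelating_def cov_eq by (rule uniform_limit_null_cmult)
qed

lemma decorrelating_bounded_borel:
  assumes mixing: "\<And>A. A \<in> sets borel \<Longrightarrow> decorrelating (indicator A)"
    and g: "bounded_borel g"
  shows "decorrelating g"
  unfolding decorrelating_def
proof (rule uniform_limit_approximable)
  fix e :: real assume "e > 0"
  obtain B where B: "\<And>x. \<bar>g x\<bar> \<le> B"
    using g by (elim bounded_borelE) blast
  then have "B \<ge> 0"
    using order_trans[OF abs_ge_zero] by blast
  define d where "d = min 1 (e / (2 * (2 * B + 1)))"
  have "d > 0"
    using \<open>e > 0\<close> \<open>B \<ge> 0\<close> by (simp add: d_def)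
  have "d * (2 * B + d) \<le> d * (2 * B + 1)"
    using \<open>d > 0\<close> by (intro mult_left_mono) (auto simp: d_def)
  also have "\<dots> \<le> e / (2 * (2 * B + 1)) * (2 * B + 1)"
    using \<open>B \<ge> 0\<close> by (intro mult_right_mono) (auto simp: d_def)
  also have "\<dots> = e / 2"
    using \<open>B \<ge> 0\<close> by (simp add: field_simps)
  finally have err: "2 * (d * (2 * B + d)) \<le> e"
    by simp
  define f where "f x = d * \<lfloor>g x / d\<rfloor>" for x
  have f: "simple_function borel f"
    unfolding f_def using g \<open>d > 0\<close> by (rule simple_function_floor_multiple)
  have "\<bar>orbit_cov i j g g - orbit_cov i j f f\<bar> \<le> e" for i j
    using orbit_cov_approx[OF g simple_function_bounded_borel[OF f] B, of d i j]
      abs_sub_floor_multiple_le[OF \<open>d > 0\<close>] err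
    unfolding f_def by fastforce
  then show "\<exists>b m. uniform_limit {1..} b m sequentially \<and> (\<forall>i\<in>{1..}. dist 0 (m i) \<le> e)
      \<and> (\<forall>k. \<forall>i\<in>{1..}. dist (orbit_cov i (i + k) g g) (b k i) \<le> e)"
    using decorrelating_simple_function[OF mixing f] \<open>e > 0\<close> unfolding decorrelating_def
    by (intro exI[of _ "\<lambda>k i. orbit_cov i (i + k) f f"] exI[of _ "\<lambda>_. 0"]) (simp add: dist_real_def)
qed

section \<open>Mean-square convergence of orbit averages\<close>

lemma orbit_cov_off_diagonal_small:
  assumes "decorrelating g" and "e > 0"
  obtains K where "\<And>i j. 1 \<le> i \<Longrightarrow> 1 \<le> j \<Longrightarrow> i + K \<le> j \<or> j + K \<le> i \<Longrightarrow> \<bar>orbit_cov i j g g\<bar> \<le> e"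
proof -
  obtain K where K: "\<And>k i. K \<le> k \<Longrightarrow> 1 \<le> i \<Longrightarrow> \<bar>orbit_cov i (i + k) g g\<bar> < e"
    using assms unfolding decorrelating_def uniform_limit_sequentially_iff by fastforce
  have "\<bar>orbit_cov i j g g\<bar> \<le> e" if "1 \<le> i" "1 \<le> j" "i + K \<le> j \<or> j + K \<le> i" for i j
  proof (cases "i + K \<le> j")
    case True
    then have "K \<le> j - i" and "i + (j - i) = j"
      by auto
    then show ?thesis
      using K[OF _ \<open>1 \<le> i\<close>] by fastforce
  next
    case False
    then have "K \<le> i - j" and "j + (i - j) = i"
      using that(3) by auto
    then show ?thesis
      using K[OF _ \<open>1 \<le> j\<close>] by (fastforce simp: orbit_cov_commute[of i j])
  qed
  then show ?thesis by (rule that)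
qed

lemma integral_orbit_centered_product:
  assumes g: "bounded_borel g"
  shows "(\<integral>x. (g ((S ^^ i) x) - c) * (g ((S ^^ j) x) - c) \<partial>M)
    = orbit_cov i j g g + ((\<integral>x. g ((S ^^ i) x) \<partial>M) - c) * ((\<integral>x. g ((S ^^ j) x) \<partial>M) - c)"
proof -
  have "(\<lambda>x. (g ((S ^^ i) x) - c) * (g ((S ^^ j) x) - c))
      = (\<lambda>x. g ((S ^^ i) x) * g ((S ^^ j) x) - (c * g ((S ^^ j) x) + c * g ((S ^^ i) x) - c * c))"
    by (auto simp: algebra_simps)
  then show ?thesis
    using integrable_orbit_mult[OF g g, of i j] integrable_orbit[OF g, of i] integrable_orbit[OF g, of j]
    by (simp add: orbit_cov_def prob_space[unfolded space_M] algebra_simps)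
qed

lemma integral_square_orbit_average:
  assumes g: "bounded_borel g" and "n > 0"
  shows "(\<integral>x. (1 / real n * (\<Sum>i=1..n. g ((S ^^ i) x)) - c)\<^sup>2 \<partial>M)
    = (\<Sum>i=1..n. \<Sum>j=1..n. \<integral>x. (g ((S ^^ i) x) - c) * (g ((S ^^ j) x) - c) \<partial>M) / (real n)\<^sup>2"
proof -
  have gc: "bounded_borel (\<lambda>y. g y - c)"
    using g by (rule bounded_borel_diff_const)
  have "(1 / real n * (\<Sum>i=1..n. g ((S ^^ i) x)) - c)\<^sup>2
      = (\<Sum>i=1..n. \<Sum>j=1..n. (g ((S ^^ i) x) - c) * (g ((S ^^ j) x) - c)) / (real n)\<^sup>2" for x
  proof -
    have "1 / real n * (\<Sum>i=1..n. g ((S ^^ i) x)) - c = (\<Sum>i=1..n. g ((S ^^ i) x) - c) / real n"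
      using \<open>n > 0\<close> by (simp add: sum_subtractf field_simps)
    then show ?thesis
      by (simp add: power2_eq_square sum_product power_divide)
  qed
  moreover have "(\<integral>x. (\<Sum>i=1..n. \<Sum>j=1..n. (g ((S ^^ i) x) - c) * (g ((S ^^ j) x) - c)) \<partial>M)
      = (\<Sum>i=1..n. \<Sum>j=1..n. \<integral>x. (g ((S ^^ i) x) - c) * (g ((S ^^ j) x) - c) \<partial>M)"
    using integrable_orbit_mult[OF gc gc]
    by (simp add: Bochner_Integration.integral_sum integrable_sum)
  ultimately show ?thesis
    by simp
qed

lemma tendsto_orbit_average_L2:
  assumes g: "bounded_borel g" and "decorrelating g"
    and mean: "(\<lambda>i. \<integral>x. g ((S ^^ i) x) \<partial>M) \<longlonglongrightarrow> c"
  shows "(\<lambda>n. \<integral>x. (1 / real n * (\<Sum>i=1..n. g ((S ^^ i) x)) - c)\<^sup>2 \<partial>M) \<longlonglongrightarrow> 0"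
proof -
  define m where "m i = (\<integral>x. g ((S ^^ i) x) \<partial>M)" for i
  define a where "a i j = (\<integral>x. (g ((S ^^ i) x) - c) * (g ((S ^^ j) x) - c) \<partial>M)" for i j
  obtain B where B: "\<And>x. \<bar>g x\<bar> \<le> B"
    using g by (elim bounded_borelE) blast
  have "\<bar>a i j\<bar> \<le> (B + \<bar>c\<bar>)\<^sup>2" for i j
  proof -
    have centered: "\<bar>g y - c\<bar> \<le> B + \<bar>c\<bar>" for y
      using B[of y] abs_triangle_ineq4[of "g y" c] by linarith
    have "\<bar>(g y - c) * (g z - c)\<bar> \<le> (B + \<bar>c\<bar>)\<^sup>2" for y z
      unfolding abs_mult power2_eq_square
      using centered[of y] centered[of z] by (intro mult_mono) (auto intro: order_trans[OF abs_ge_zero])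
    then show ?thesis
      using abs_integral_diff_le[OF integrable_orbit_mult[OF bounded_borel_diff_const[OF g, of c]
          bounded_borel_diff_const[OF g, of c], of i j] integrable_zero]
      by (simp add: a_def)
  qed
  moreover have "\<exists>K. \<forall>i j. K \<le> i \<longrightarrow> K \<le> j \<longrightarrow> (i + K \<le> j \<or> j + K \<le> i) \<longrightarrow> \<bar>a i j\<bar> \<le> e"
    if "e > 0" for e
  proof -
    obtain K where K: "\<And>i j. 1 \<le> i \<Longrightarrow> 1 \<le> j \<Longrightarrow> i + K \<le> j \<or> j + K \<le> i \<Longrightarrow> \<bar>orbit_cov i j g g\<bar> \<le> e / 2"
      using orbit_cov_off_diagonal_small[OF \<open>decorrelating g\<close>, of "e / 2"] \<open>e > 0\<close> by auto
    obtain N where N: "\<And>i. N \<le> i \<Longrightarrow> \<bar>m i - c\<bar> < min 1 (e / 2)"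
      using LIMSEQ_D[OF mean, of "min 1 (e / 2)"] \<open>e > 0\<close> unfolding m_def by auto
    define K' where "K' = max 1 (max K N)"
    have "\<bar>a i j\<bar> \<le> e" if "K' \<le> i" "K' \<le> j" "i + K' \<le> j \<or> j + K' \<le> i" for i j
    proof -
      have "\<bar>(m i - c) * (m j - c)\<bar> \<le> 1 * (e / 2)"
        unfolding abs_mult using N[of i] N[of j] that by (intro mult_mono) (auto simp: K'_def)
      moreover have "i + K \<le> j \<or> j + K \<le> i" "1 \<le> i" "1 \<le> j"
        using that by (auto simp: K'_def)
      then have "\<bar>orbit_cov i j g g\<bar> \<le> e / 2"
        by (rule K[rotated 2])
      ultimately show ?thesis
        unfolding a_def integral_orbit_centered_product[OF g] m_def by linarith
    qed
    then show ?thesis by blast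
  qed
  ultimately have "(\<lambda>n. (\<Sum>i=1..n. \<Sum>j=1..n. a i j) / (real n)\<^sup>2) \<longlonglongrightarrow> 0"
    by (rule double_average_tendsto_zero)
  moreover have "\<forall>\<^sub>F n in sequentially. (\<Sum>i=1..n. \<Sum>j=1..n. a i j) / (real n)\<^sup>2
      = (\<integral>x. (1 / real n * (\<Sum>i=1..n. g ((S ^^ i) x)) - c)\<^sup>2 \<partial>M)"
    using eventually_gt_at_top[of 0]
    by eventually_elim (simp only: a_def integral_square_orbit_average[OF g])
  ultimately show ?thesis
    by (rule Lim_transform_eventually)
qed

lemma asymptotically_stationary_prob_space:
  assumes "asymptotically_stationary M S \<nu>"
  shows "prob_space \<nu>"
proof
  have "sets \<nu> = sets borel" and "(\<lambda>k. emeasure M ((S ^^ k) -` UNIV)) \<longlonglongrightarrow> emeasure \<nu> UNIV"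
    using assms unfolding asymptotically_stationary_def by (auto simp del: vimage_UNIV)
  then show "emeasure \<nu> (space \<nu>) = 1"
    using LIMSEQ_unique[OF _ tendsto_const] emeasure_space_1 sets_eq_imp_space_eq[of \<nu> borel] by simp
qed

lemma asymptotically_stationary_measure_tendsto:
  assumes "asymptotically_stationary M S \<nu>" and A: "A \<in> sets borel"
  shows "(\<lambda>k. measure M ((S ^^ k) -` A)) \<longlonglongrightarrow> measure \<nu> A"
proof (rule tendsto_ennrealD)
  interpret \<nu>: prob_space \<nu>
    using assms(1) by (rule asymptotically_stationary_prob_space)
  show "(\<lambda>k. ennreal (measure M ((S ^^ k) -` A))) \<longlonglongrightarrow> ennreal (measure \<nu> A)"
    using assms unfolding asymptotically_stationary_def
    by (simp add: emeasure_eq_measure \<nu>.emeasure_eq_measure)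
qed auto

lemma tendsto_orbit_mean:
  assumes "asymptotically_stationary M S \<nu>" and g: "bounded_borel g"
  shows "(\<lambda>i. \<integral>x. g ((S ^^ i) x) \<partial>M) \<longlonglongrightarrow> (\<integral>x. g x \<partial>\<nu>)"
proof -
  have [measurable]: "g \<in> borel_measurable borel"
    using g by (simp add: bounded_borel_def)
  have "(\<lambda>k. \<integral>x. g x \<partial>distr M borel (S ^^ k)) \<longlonglongrightarrow> (\<integral>x. g x \<partial>\<nu>)"
  proof (rule tendsto_integral_setwise)
    show "prob_space (distr M borel (S ^^ k))" for k
      by (rule prob_space_distr) simp
    show "prob_space \<nu>"
      using assms(1) by (rule asymptotically_stationary_prob_space)
    show "sets \<nu> = sets borel"
      using assms(1) unfolding asymptotically_stationary_def by simp
    show "(\<lambda>k. measure (distr M borel (S ^^ k)) A) \<longlonglongrightarrow> measure \<nu> A" if "A \<in> sets borel" for A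
      using asymptotically_stationary_measure_tendsto[OF assms(1) that] that by (simp add: measure_distr)
  qed (use g in auto)
  then show ?thesis
    by (simp add: integral_distr)
qed

lemma integral_mu_n:
  fixes F :: "(nat \<Rightarrow> 'a) \<Rightarrow> real"
  assumes "F \<in> borel_measurable (PiM {1..n} (\<lambda>_. borel))"
  shows "(\<integral>y. F y \<partial>mu_n M S n) = (\<integral>x. F (\<lambda>i\<in>{1..n}. (S ^^ i) x) \<partial>M)"
  unfolding mu_n_def
  by (rule integral_distr[OF _ assms]) (intro measurable_restrict measurable_funpow_S)

end

theorem proposition3p3:
  fixes \<mu> \<nu> :: "'a::{metric_space, second_countable_topology} measure"
    and S :: "'a \<Rightarrow> 'a"
    and g :: "'a \<Rightarrow> real"
  assumes "prob_space \<mu>" and "sets \<mu> = sets borel"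
    and "S \<in> borel_measurable borel"
    and "\<forall>A\<in>sets borel.
           (\<lambda>k. SUP i\<in>{1::nat..}. \<bar>measure \<mu> ((S ^^ i) -` A \<inter> (S ^^ k) -` ((S ^^ i) -` A))
                - measure \<mu> ((S ^^ i) -` A) * measure \<mu> ((S ^^ k) -` ((S ^^ i) -` A))\<bar>)
           \<longlonglongrightarrow> 0"
    and "asymptotically_stationary \<mu> S \<nu>"
    and "continuous_on UNIV g" and "bounded (range g)"
  shows "(\<lambda>n. \<integral>x. (\<bar>(1 / real n) * (\<Sum>i=1..n. g (x i)) - (\<integral>y. g y \<partial>\<nu>)\<bar>)\<^sup>2 \<partial>(mu_n \<mu> S n))
           \<longlonglongrightarrow> 0"
proof -
  interpret borel_dynamics \<mu> S
    using assms(1-3) by (simp add: borel_dynamics_def borel_dynamics_axioms_def)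
  have g: "bounded_borel g"
    using assms(6,7) by (simp add: bounded_borel_def borel_measurable_continuous_onI)
  have "decorrelating g"
    using assms(4) by (intro decorrelating_bounded_borel[OF decorrelating_indicatorI g]) auto
  then have "(\<lambda>n. \<integral>x. (1 / real n * (\<Sum>i=1..n. g ((S ^^ i) x)) - (\<integral>y. g y \<partial>\<nu>))\<^sup>2 \<partial>\<mu>) \<longlonglongrightarrow> 0"
    by (intro tendsto_orbit_average_L2 g tendsto_orbit_mean assms(5))
  moreover have "(\<integral>x. (\<bar>(1 / real n) * (\<Sum>i=1..n. g (x i)) - (\<integral>y. g y \<partial>\<nu>)\<bar>)\<^sup>2 \<partial>(mu_n \<mu> S n))
      = (\<integral>x. (1 / real n * (\<Sum>i=1..n. g ((S ^^ i) x)) - (\<integral>y. g y \<partial>\<nu>))\<^sup>2 \<partial>\<mu>)" for n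
    using g by (subst integral_mu_n) (auto simp: bounded_borel_def)
  ultimately show ?thesis
    by simp
qed

end
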